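(* Let $G=(V,E)$ be a connected graph with $n$ nodes and let $G'=(V,E\cup \beta)$ be the modified graph after the insertion of a batch $\beta$ of edges. Let $S$ be a set of $r$ shortest paths of $G$ sampled according to $\pi_{G}$, with $r=\frac{c}{\epsilon^{2}}\left(\lfloor\log_{2}\left(VD(G)-2\right)\rfloor+1+\ln\frac{1}{\delta}\right)$ for some constants $\epsilon,\delta\in(0,1)$. Then, if a new set $S'$ of shortest paths of $G'$ is built according to procedure $\mathcal{P}$ and the approximated betweenness centrality $\tilde{c}'_B(v)$ of each node $v$ is computed as the fraction of paths of $S'$ that $v$ is internal to, then \[ \Pr(\exists v\in V\ \text{s.t.}\ |c'_{B}(v)-\tilde{c}'_B(v)|>\epsilon)<\delta, \] where $c'_{B}(v)$ is the new exact value of betweenness centrality of $v$ after the edge insertions.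
   Context: For a graph with $n$ nodes, $\sigma_{st}$ denotes the number of shortest paths from $s$ to $t$ and $\sigma_{st}(v)$ the number of those passing through $v$; the (normalized) betweenness centrality is $c_B(v)=\frac{1}{n(n-1)}\sum_{s\neq v\neq t}\frac{\sigma_{st}(v)}{\sigma_{st}}$. The sampling distribution $\pi_G$ assigns to each shortest path $p_{st}$ of $G$ the probability $\pi_G(p_{st})=\frac{1}{n(n-1)}\cdot\frac{1}{\sigma_{st}}$ of being chosen in each of the $r$ independent sampling iterations (choose an ordered node pair $(s,t)$ uniformly at random, then a shortest $s$–$t$ path uniformly at random). $VD(G)$ is the vertex diameter of $G$ (number of nodes on a shortest path of $G$ with the maximum number of nodes), or an upper bound on it that cannot increase under edge insertions in a connected graph; $c\approx 0.5$ is a universal constant. Procedure $\mathcal{P}$: for each sampled path $p_{st}\in S$, keep it ($p'_{st}=p_{st}$) if the new distance $d'_s(t)$ equals the old distance $d_s(t)$ and the new number of shortest paths $\sigma'_{st}$ equals $\sigma_{st}$; otherwise replace it by a path $p'_{st}$ chosen uniformly at random among the set of shortest $s$–$t$ paths in $G'$. *)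

theory Defs
  imports "HOL-Probability.Probability"
begin

definition undirected_graph :: "'a set \<Rightarrow> ('a \<times> 'a) set \<Rightarrow> bool" where
  "undirected_graph V E \<longleftrightarrow> finite V \<and> E \<subseteq> V \<times> V \<and> sym E \<and> (\<forall>v. (v, v) \<notin> E)"

definition connected_graph :: "'a set \<Rightarrow> ('a \<times> 'a) set \<Rightarrow> bool" where
  "connected_graph V E \<longleftrightarrow> (\<forall>s\<in>V. \<forall>t\<in>V. (s, t) \<in> E\<^sup>*)"

definition walk :: "('a \<times> 'a) set \<Rightarrow> 'a list \<Rightarrow> bool" where
  "walk E p \<longleftrightarrow> p \<noteq> [] \<and> (\<forall>i. Suc i < length p \<longrightarrow> (p ! i, p ! Suc i) \<in> E)"

definition dist_g :: "('a \<times> 'a) set \<Rightarrow> 'a \<Rightarrow> 'a \<Rightarrow> nat" where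
  "dist_g E s t = (LEAST k. \<exists>p. walk E p \<and> hd p = s \<and> last p = t \<and> length p = Suc k)"

definition shortest_paths :: "('a \<times> 'a) set \<Rightarrow> 'a \<Rightarrow> 'a \<Rightarrow> 'a list set" where
  "shortest_paths E s t =
     {p. walk E p \<and> hd p = s \<and> last p = t \<and> length p = Suc (dist_g E s t)}"

definition sigma :: "('a \<times> 'a) set \<Rightarrow> 'a \<Rightarrow> 'a \<Rightarrow> nat" where
  "sigma E s t = card (shortest_paths E s t)"

definition sigma_via :: "('a \<times> 'a) set \<Rightarrow> 'a \<Rightarrow> 'a \<Rightarrow> 'a \<Rightarrow> nat" where
  "sigma_via E s t v = card {p \<in> shortest_paths E s t. v \<in> set p}"

definition betweenness :: "'a set \<Rightarrow> ('a \<times> 'a) set \<Rightarrow> 'a \<Rightarrow> real" where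
  "betweenness V E v =
     (1 / (real (card V) * (real (card V) - 1))) *
     (\<Sum>(s, t) \<in> {(s, t). s \<in> V \<and> t \<in> V \<and> s \<noteq> t \<and> s \<noteq> v \<and> t \<noteq> v}.
        real (sigma_via E s t v) / real (sigma E s t))"

definition vertex_diameter :: "'a set \<Rightarrow> ('a \<times> 'a) set \<Rightarrow> nat" where
  "vertex_diameter V E =
     Max {length p | p s t. s \<in> V \<and> t \<in> V \<and> p \<in> shortest_paths E s t}"

definition path_sampling :: "'a set \<Rightarrow> ('a \<times> 'a) set \<Rightarrow> 'a list pmf" where
  "path_sampling V E =
     pmf_of_set {(s, t). s \<in> V \<and> t \<in> V \<and> s \<noteq> t} \<bind>
       (\<lambda>(s, t). pmf_of_set (shortest_paths E s t))"

text \<open>One step of procedure P: keep the old path, or resample a shortest path in G'.\<close>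
definition update_path :: "('a \<times> 'a) set \<Rightarrow> ('a \<times> 'a) set \<Rightarrow> 'a list \<Rightarrow> 'a list pmf" where
  "update_path E E' p =
     (let s = hd p; t = last p in
      if dist_g E' s t = dist_g E s t \<and> sigma E' s t = sigma E s t
      then return_pmf p
      else pmf_of_set (shortest_paths E' s t))"

definition internal :: "'a \<Rightarrow> 'a list \<Rightarrow> bool" where
  "internal v p \<longleftrightarrow> v \<in> set p \<and> v \<noteq> hd p \<and> v \<noteq> last p"

definition sample_size :: "real \<Rightarrow> real \<Rightarrow> real \<Rightarrow> nat \<Rightarrow> nat" where
  "sample_size c \<epsilon> \<delta> D =
     nat \<lceil>c / \<epsilon>\<^sup>2 * (real_of_int \<lfloor>log 2 (real D - 2)\<rfloor> + 1 + ln (1 / \<delta>))\<rceil>"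

definition sample_set :: "nat \<Rightarrow> 'a list pmf \<Rightarrow> (nat \<Rightarrow> 'a list) pmf" where
  "sample_set r D = Pi_pmf {..<r} [] (\<lambda>_. D)"

definition updated_sample :: "nat \<Rightarrow> ('a \<times> 'a) set \<Rightarrow> ('a \<times> 'a) set \<Rightarrow> (nat \<Rightarrow> 'a list) \<Rightarrow> (nat \<Rightarrow> 'a list) pmf" where
  "updated_sample r E E' S = Pi_pmf {..<r} [] (\<lambda>i. update_path E E' (S i))"

definition approx_betweenness :: "nat \<Rightarrow> (nat \<Rightarrow> 'a list) \<Rightarrow> 'a \<Rightarrow> real" where
  "approx_betweenness r S v = real (card {i \<in> {..<r}. internal v (S i)}) / real r"

end

theory Submission
  imports Defs
begin

text \<open>
  Procedure P turns a sample of \<open>\<pi>\<^sub>G\<close> into a sample of \<open>\<pi>\<^sub>G\<^sub>'\<close>: a pair whose distance and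
  number of shortest paths are unchanged has exactly the same shortest paths in \<open>G'\<close> (the old
  ones are still walks of the right length), and every other pair is resampled uniformly.
  Hence \<open>S'\<close> consists of \<open>r\<close> independent draws from \<open>\<pi>\<^sub>G\<^sub>'\<close>, and the probability that \<open>v\<close> is
  internal to one draw is exactly \<open>c'\<^sub>B(v)\<close>.

  A multiplicative Chernoff bound for the number of draws to which \<open>v\<close> is internal shows that
  the estimate of \<open>v\<close> is off by more than \<open>\<epsilon>\<close> with probability at most
  \<open>2 c'\<^sub>B(v) exp(-r \<epsilon>\<^sup>2 / 16)\<close>. Edge insertions only shorten shortest paths, so every draw
  has at most \<open>VD(G) - 2\<close> internal nodes, i.e. \<open>\<Sum>\<^sub>v c'\<^sub>B(v) \<le> VD(G) - 2\<close>. The union bound over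
  \<open>v\<close> is therefore at most \<open>2 (VD(G) - 2) exp(-r \<epsilon>\<^sup>2 / 16)\<close>, which is below \<open>\<delta>\<close> for \<open>c = 128\<close>.
\<close>

section \<open>Walks and shortest paths\<close>

lemma walk_mono: "E \<subseteq> E' \<Longrightarrow> walk E p \<Longrightarrow> walk E' p"
  unfolding walk_def by blast

lemma walk_snoc:
  assumes "walk E p" "(last p, z) \<in> E"
  shows "walk E (p @ [z])"
  unfolding walk_def
proof (intro conjI allI impI)
  fix i assume i: "Suc i < length (p @ [z])"
  have "p \<noteq> []" using assms(1) by (simp add: walk_def)
  show "((p @ [z]) ! i, (p @ [z]) ! Suc i) \<in> E"
  proof (cases "Suc i < length p")
    case True
    then show ?thesis using assms(1) by (simp add: walk_def nth_append)
  next
    case False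
    then have "Suc i = length p" using i by simp
    then have "p ! i = last p" using \<open>p \<noteq> []\<close> by (metis diff_Suc_1 last_conv_nth)
    then show ?thesis using \<open>Suc i = length p\<close> assms(2) by (simp add: nth_append)
  qed
qed simp

lemma rtrancl_imp_walk:
  assumes "(s, t) \<in> E\<^sup>*"
  shows "\<exists>p. walk E p \<and> hd p = s \<and> last p = t"
  using assms
proof (induction rule: rtrancl_induct)
  case base
  show ?case by (rule exI[of _ "[s]"]) (simp add: walk_def)
next
  case (step y z)
  then obtain p where p: "walk E p" "hd p = s" "last p = y" by blast
  then have "walk E (p @ [z])" using step(2) by (intro walk_snoc) auto
  moreover have "hd (p @ [z]) = s" using p by (simp add: walk_def)
  ultimately show ?case by (intro exI[of _ "p @ [z]"]) simp
qed

lemma shortest_paths_nonempty: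
  assumes "walk E p" "hd p = s" "last p = t"
  shows "shortest_paths E s t \<noteq> {}"
proof -
  have "\<exists>k q. walk E q \<and> hd q = s \<and> last q = t \<and> length q = Suc k"
    using assms by (intro exI[of _ "length p - 1"] exI[of _ p]) (auto simp: walk_def)
  from LeastI_ex[OF this] show ?thesis
    unfolding shortest_paths_def dist_g_def by blast
qed

lemma dist_g_le_walk:
  assumes "walk E p" "hd p = s" "last p = t"
  shows "dist_g E s t \<le> length p - 1"
proof -
  have "length p = Suc (length p - 1)" using assms by (cases p) (auto simp: walk_def)
  then show ?thesis unfolding dist_g_def using assms by (intro Least_le) blast
qed

lemma dist_g_mono:
  assumes "E \<subseteq> E'" "walk E p" "hd p = s" "last p = t"
  shows "dist_g E' s t \<le> dist_g E s t"
proof -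
  obtain q where "q \<in> shortest_paths E s t"
    using shortest_paths_nonempty[OF assms(2-4)] by blast
  then have "walk E' q" "hd q = s" "last q = t" "length q = Suc (dist_g E s t)"
    using walk_mono[OF assms(1)] by (auto simp: shortest_paths_def)
  then show ?thesis using dist_g_le_walk by fastforce
qed

lemma walk_subset_vertices:
  assumes "E \<subseteq> V \<times> V" "walk E p" "hd p \<in> V"
  shows "set p \<subseteq> V"
proof
  fix x assume "x \<in> set p"
  then obtain i where i: "i < length p" "p ! i = x" by (auto simp: in_set_conv_nth)
  show "x \<in> V"
  proof (cases i)
    case 0
    then show ?thesis using i assms by (cases p) (auto simp: walk_def)
  next
    case (Suc j)
    then have "(p ! j, p ! i) \<in> E" using assms(2) i by (auto simp: walk_def)
    then show ?thesis using assms(1) i by auto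
  qed
qed

lemma finite_shortest_paths:
  assumes "finite V" "E \<subseteq> V \<times> V" "s \<in> V"
  shows "finite (shortest_paths E s t)"
proof (rule finite_subset)
  show "shortest_paths E s t \<subseteq> {p. set p \<subseteq> V \<and> length p = Suc (dist_g E s t)}"
    unfolding shortest_paths_def using walk_subset_vertices[OF assms(2)] assms(3) by blast
  show "finite {p. set p \<subseteq> V \<and> length p = Suc (dist_g E s t)}"
    using assms(1) by (rule finite_lists_length_eq)
qed

lemma connected_graph_walk:
  "connected_graph V E \<Longrightarrow> s \<in> V \<Longrightarrow> t \<in> V \<Longrightarrow> \<exists>p. walk E p \<and> hd p = s \<and> last p = t"
  unfolding connected_graph_def by (intro rtrancl_imp_walk) blast

lemma connected_graph_mono: "connected_graph V E \<Longrightarrow> E \<subseteq> E' \<Longrightarrow> connected_graph V E'"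
  unfolding connected_graph_def using rtrancl_mono by blast

lemma shortest_paths_finite_nonempty:
  assumes "undirected_graph V E" "connected_graph V E" "s \<in> V" "t \<in> V"
  shows "finite (shortest_paths E s t)" "shortest_paths E s t \<noteq> {}"
  using assms connected_graph_walk[OF assms(2-4)]
  by (auto simp: undirected_graph_def intro: finite_shortest_paths dest!: shortest_paths_nonempty)

lemma shortest_paths_eq_if_unchanged:
  assumes "E \<subseteq> E'" "finite (shortest_paths E' s t)"
    "dist_g E' s t = dist_g E s t" "sigma E' s t = sigma E s t"
  shows "shortest_paths E s t = shortest_paths E' s t"
proof -
  have "shortest_paths E s t \<subseteq> shortest_paths E' s t"
    using assms(1,3) walk_mono unfolding shortest_paths_def by auto
  then show ?thesis
    using card_subset_eq[OF assms(2)] assms(4) unfolding sigma_def by simp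
qed

lemma finite_shortest_path_lengths:
  "finite V \<Longrightarrow> finite {length p | p s t. s \<in> V \<and> t \<in> V \<and> p \<in> shortest_paths E s t}"
  by (rule finite_subset[of _ "(\<lambda>(s, t). Suc (dist_g E s t)) ` (V \<times> V)"])
    (auto simp: shortest_paths_def)

lemma length_le_vertex_diameter:
  "finite V \<Longrightarrow> s \<in> V \<Longrightarrow> t \<in> V \<Longrightarrow> p \<in> shortest_paths E s t \<Longrightarrow> length p \<le> vertex_diameter V E"
  unfolding vertex_diameter_def by (rule Max_ge[OF finite_shortest_path_lengths]) blast+

section \<open>Procedure P samples from the new distribution\<close>

abbreviation node_pairs :: "'a set \<Rightarrow> ('a \<times> 'a) set" where
  "node_pairs V \<equiv> {(s, t). s \<in> V \<and> t \<in> V \<and> s \<noteq> t}"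

lemma finite_node_pairs: "finite V \<Longrightarrow> finite (node_pairs V)"
  by (rule finite_subset[of _ "V \<times> V"]) auto

lemma node_pairs_nonempty:
  assumes "finite V" "card V \<ge> 2"
  shows "node_pairs V \<noteq> {}"
proof -
  have "\<not> card V \<le> Suc 0" using assms(2) by simp
  then obtain a b where "a \<in> V" "b \<in> V" "a \<noteq> b"
    using card_le_Suc0_iff_eq[OF assms(1)] by blast
  then show ?thesis by blast
qed

lemma card_node_pairs:
  assumes "finite V"
  shows "real (card (node_pairs V)) = real (card V) * (real (card V) - 1)"
proof -
  have "node_pairs V = V \<times> V - (\<lambda>x. (x, x)) ` V" by auto
  moreover have "card ((\<lambda>x. (x, x)) ` V) = card V" by (rule card_image) (auto simp: inj_on_def)
  ultimately have "card (node_pairs V) = card V * card V - card V"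
    using card_Diff_subset[of "(\<lambda>x. (x, x)) ` V" "V \<times> V"] assms
    by (auto simp: card_cartesian_product)
  moreover have "card V \<le> card V * card V" by (cases "card V") auto
  ultimately show ?thesis by (simp add: algebra_simps)
qed

lemma set_pmf_of_node_pairs:
  "finite V \<Longrightarrow> card V \<ge> 2 \<Longrightarrow> set_pmf (pmf_of_set (node_pairs V)) = node_pairs V"
  by (intro set_pmf_of_set finite_node_pairs node_pairs_nonempty)

lemma set_pmf_path_sampling:
  assumes "undirected_graph V E" "connected_graph V E" "card V \<ge> 2"
  shows "set_pmf (path_sampling V E) = (\<Union>(s, t)\<in>node_pairs V. shortest_paths E s t)"
proof -
  have "finite V" using assms(1) by (simp add: undirected_graph_def)
  then show ?thesis
    unfolding path_sampling_def set_bind_pmf set_pmf_of_node_pairs[OF \<open>finite V\<close> assms(3)]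
    using shortest_paths_finite_nonempty[OF assms(1,2)] by (intro SUP_cong) auto
qed

lemma uniform_shortest_path_bind_update_path:
  assumes "undirected_graph V E" "undirected_graph V E'" "E \<subseteq> E'" "connected_graph V E"
    "s \<in> V" "t \<in> V"
  shows "pmf_of_set (shortest_paths E s t) \<bind> update_path E E' = pmf_of_set (shortest_paths E' s t)"
proof -
  note SP = shortest_paths_finite_nonempty[OF assms(1,4-6)]
  have fin': "finite (shortest_paths E' s t)"
    using assms(2,5) by (auto simp: undirected_graph_def intro: finite_shortest_paths)
  have hd_last: "hd p = s" "last p = t" if "p \<in> set_pmf (pmf_of_set (shortest_paths E s t))" for p
    using that SP by (auto simp: shortest_paths_def)
  show ?thesis
  proof (cases "dist_g E' s t = dist_g E s t \<and> sigma E' s t = sigma E s t")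
    case True
    have "pmf_of_set (shortest_paths E s t) \<bind> update_path E E' =
               pmf_of_set (shortest_paths E s t) \<bind> return_pmf"
      using True by (intro bind_pmf_cong refl) (auto simp: update_path_def Let_def hd_last)
    then show ?thesis
      using shortest_paths_eq_if_unchanged[OF assms(3) fin'] True by (simp add: bind_return_pmf')
  next
    case False
    have "pmf_of_set (shortest_paths E s t) \<bind> update_path E E' =
               pmf_of_set (shortest_paths E s t) \<bind> (\<lambda>_. pmf_of_set (shortest_paths E' s t))"
      using False by (intro bind_pmf_cong refl) (auto simp: update_path_def Let_def hd_last)
    then show ?thesis by simp
  qed
qed

lemma path_sampling_bind_update_path:
  assumes "undirected_graph V E" "undirected_graph V E'" "E \<subseteq> E'" "connected_graph V E"
    "card V \<ge> 2"
  shows "path_sampling V E \<bind> update_path E E' = path_sampling V E'"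
proof -
  have "finite V" using assms(1) by (simp add: undirected_graph_def)
  then show ?thesis
    unfolding path_sampling_def bind_assoc_pmf
    using uniform_shortest_path_bind_update_path[OF assms(1-4)]
    by (intro bind_pmf_cong) (auto simp: set_pmf_of_node_pairs[OF _ assms(5)])
qed

lemma updated_sample_eq_Pi_pmf:
  assumes "undirected_graph V E" "undirected_graph V E'" "E \<subseteq> E'" "connected_graph V E"
    "card V \<ge> 2"
  shows "sample_set r (path_sampling V E) \<bind> updated_sample r E E' =
         Pi_pmf {..<r} [] (\<lambda>_. path_sampling V E')"
  unfolding sample_set_def updated_sample_def path_sampling_bind_update_path[OF assms, symmetric]
  by (rule Pi_pmf_bind[symmetric]) simp

section \<open>Betweenness as a path-sampling probability\<close>

lemma prob_internal_uniform_shortest_path: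
  assumes "finite (shortest_paths E s t)" "shortest_paths E s t \<noteq> {}"
  shows "measure_pmf.prob (pmf_of_set (shortest_paths E s t)) {p. internal v p} =
         (if s = v \<or> t = v then 0 else real (sigma_via E s t v) / real (sigma E s t))"
proof -
  have "shortest_paths E s t \<inter> {p. internal v p} =
        (if s = v \<or> t = v then {} else {p \<in> shortest_paths E s t. v \<in> set p})"
    by (auto simp: internal_def shortest_paths_def)
  then show ?thesis
    using assms by (simp add: measure_pmf_of_set sigma_def sigma_via_def)
qed

lemma prob_internal_path_sampling:
  assumes "undirected_graph V E" "connected_graph V E" "card V \<ge> 2"
  shows "measure_pmf.prob (path_sampling V E) {p. internal v p} = betweenness V E v"
proof -
  have fV: "finite V" using assms(1) by (simp add: undirected_graph_def)
  let ?A = "{p. internal v p}"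
  let ?Pv = "{(s, t). s \<in> V \<and> t \<in> V \<and> s \<noteq> t \<and> s \<noteq> v \<and> t \<noteq> v}"
  let ?f = "\<lambda>(s, t). real (sigma_via E s t v) / real (sigma E s t)"
  have prob_pair: "measure_pmf.prob (pmf_of_set (shortest_paths E s t)) ?A =
      (if (s, t) \<in> ?Pv then ?f (s, t) else 0)" if "(s, t) \<in> node_pairs V" for s t
  proof -
    have st: "s \<in> V" "t \<in> V" using that by auto
    show ?thesis
      using prob_internal_uniform_shortest_path[OF shortest_paths_finite_nonempty[OF assms(1,2) st], of v]
        that by auto
  qed
  have "measure_pmf.prob (path_sampling V E) ?A = measure_pmf.expectation (path_sampling V E) (indicator ?A)"
    by simp
  also have "\<dots> = (\<Sum>a\<in>node_pairs V.
      measure_pmf.prob ((\<lambda>(s, t). pmf_of_set (shortest_paths E s t)) a) ?A) / real (card (node_pairs V))"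
    unfolding path_sampling_def
    by (subst pmf_expectation_bind_pmf_of_set)
      (use finite_node_pairs[OF fV] node_pairs_nonempty[OF fV assms(3)]
        shortest_paths_finite_nonempty[OF assms(1,2)] in
        \<open>auto simp: sum_divide_distrib divide_inverse mult.commute sum_distrib_left\<close>)
  also have "(\<Sum>a\<in>node_pairs V. measure_pmf.prob ((\<lambda>(s, t). pmf_of_set (shortest_paths E s t)) a) ?A) =
             (\<Sum>a\<in>node_pairs V. if a \<in> ?Pv then ?f a else 0)"
    using prob_pair by (intro sum.cong) auto
  also have "\<dots> = (\<Sum>a\<in>?Pv. ?f a)"
    using finite_node_pairs[OF fV] by (subst sum.If_cases) (auto intro!: sum.cong)
  finally show ?thesis
    unfolding betweenness_def card_node_pairs[OF fV] by simp
qed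

section \<open>Edge insertions and the vertex diameter\<close>

lemma path_sampling_support:
  assumes "undirected_graph V E" "undirected_graph V E'" "E \<subseteq> E'" "connected_graph V E"
    "card V \<ge> 2" and p: "p \<in> set_pmf (path_sampling V E')"
  shows "length p \<le> vertex_diameter V E" "p \<noteq> []" "hd p \<noteq> last p"
proof -
  have fV: "finite V" using assms(1) by (simp add: undirected_graph_def)
  obtain s t where st: "s \<in> V" "t \<in> V" "s \<noteq> t" and p': "p \<in> shortest_paths E' s t"
    using p set_pmf_path_sampling[OF assms(2) connected_graph_mono[OF assms(4,3)] assms(5)] by auto
  show "p \<noteq> []" "hd p \<noteq> last p" using p' st by (simp_all add: shortest_paths_def walk_def)
  obtain w where w: "walk E w" "hd w = s" "last w = t"
    using connected_graph_walk[OF assms(4) st(1,2)] by blast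
  obtain q where q: "q \<in> shortest_paths E s t" using shortest_paths_nonempty[OF w] by blast
  have "length p = Suc (dist_g E' s t)" using p' by (simp add: shortest_paths_def)
  also have "\<dots> \<le> Suc (dist_g E s t)" using dist_g_mono[OF assms(3) w] by simp
  also have "\<dots> = length q" using q by (simp add: shortest_paths_def)
  also have "\<dots> \<le> vertex_diameter V E" by (rule length_le_vertex_diameter[OF fV st(1,2) q])
  finally show "length p \<le> vertex_diameter V E" .
qed

lemma card_internal_le:
  assumes "p \<noteq> []" "hd p \<noteq> last p"
  shows "card {v\<in>V. internal v p} \<le> length p - 2"
proof -
  have hl: "{hd p, last p} \<subseteq> set p" using assms(1) by simp
  have "card {v\<in>V. internal v p} \<le> card (set p - {hd p, last p})"
    by (rule card_mono) (auto simp: internal_def)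
  also have "\<dots> = card (set p) - 2" using card_Diff_subset[OF _ hl] assms by simp
  also have "\<dots> \<le> length p - 2" using card_length[of p] by simp
  finally show ?thesis .
qed

lemma sum_prob_internal_le_vertex_diameter:
  assumes "undirected_graph V E" "undirected_graph V E'" "E \<subseteq> E'" "connected_graph V E"
    "card V \<ge> 2"
  shows "(\<Sum>v\<in>V. measure_pmf.prob (path_sampling V E') {p. internal v p}) \<le> real (vertex_diameter V E - 2)"
proof -
  let ?M = "path_sampling V E'"
  have fV: "finite V" using assms(1) by (simp add: undirected_graph_def)
  have int: "integrable (measure_pmf ?M) (indicator {p. internal v p} :: _ \<Rightarrow> real)" for v
    by (rule measure_pmf.integrable_const_bound[where B=1]) auto
  have "(\<Sum>v\<in>V. measure_pmf.prob ?M {p. internal v p}) =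
        measure_pmf.expectation ?M (\<lambda>p. \<Sum>v\<in>V. indicator {p. internal v p} p)"
    using int by (simp add: Bochner_Integration.integral_sum)
  also have "\<dots> \<le> measure_pmf.expectation ?M (\<lambda>_. real (vertex_diameter V E - 2))"
  proof (rule integral_mono_AE)
    show "integrable (measure_pmf ?M) (\<lambda>p. \<Sum>v\<in>V. indicator {p. internal v p} p :: real)"
      using int by (intro Bochner_Integration.integrable_sum)
    show "AE p in measure_pmf ?M. (\<Sum>v\<in>V. indicator {p. internal v p} p) \<le> real (vertex_diameter V E - 2)"
    proof (rule AE_pmfI)
      fix p assume p: "p \<in> set_pmf ?M"
      note supp = path_sampling_support[OF assms p]
      have "(\<Sum>v\<in>V. indicator {p. internal v p} p :: real) = real (card {v\<in>V. internal v p})"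
        using fV by (simp add: indicator_def sum.If_cases Int_def)
      also have "\<dots> \<le> real (vertex_diameter V E - 2)"
        using card_internal_le[OF supp(2,3), of V] supp(1) by simp
      finally show "(\<Sum>v\<in>V. indicator {p. internal v p} p) \<le> real (vertex_diameter V E - 2)" .
    qed
  qed simp
  finally show ?thesis by simp
qed

section \<open>A multiplicative Chernoff bound\<close>

definition hits :: "('b \<Rightarrow> bool) \<Rightarrow> nat \<Rightarrow> (nat \<Rightarrow> 'b) \<Rightarrow> real" where
  "hits P r T = real (card {i\<in>{..<r}. P (T i)})"

lemma hits_bounds: "0 \<le> hits P r T" "hits P r T \<le> real r"
proof -
  have "card {i\<in>{..<r}. P (T i)} \<le> card {..<r}" by (intro card_mono) auto
  then show "0 \<le> hits P r T" "hits P r T \<le> real r" by (auto simp: hits_def)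
qed

lemma integrable_measure_pmf_bounded:
  fixes f :: "'a \<Rightarrow> real"
  assumes "\<And>x. \<bar>f x\<bar> \<le> B"
  shows "integrable (measure_pmf M) f"
  by (rule measure_pmf.integrable_const_bound[where B=B]) (use assms in auto)

lemma markov_inequality_pmf:
  fixes X :: "'a \<Rightarrow> real" and f :: "real \<Rightarrow> real"
  assumes "integrable (measure_pmf M) (\<lambda>x. f (X x))"
    "\<And>x. 0 \<le> f (X x)" "0 < f a" "\<And>x. a \<le> X x \<Longrightarrow> f a \<le> f (X x)"
  shows "measure_pmf.prob M {x. a \<le> X x} \<le> measure_pmf.expectation M (\<lambda>x. f (X x)) / f a"
proof -
  have "measure_pmf.prob M {x. a \<le> X x} \<le> measure_pmf.prob M {x\<in>space (measure_pmf M). f a \<le> f (X x)}"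
    using assms(4) by (intro measure_pmf.finite_measure_mono) auto
  also have "\<dots> \<le> measure_pmf.expectation M (\<lambda>x. f (X x)) / f a"
    using assms by (intro integral_Markov_inequality_measure) auto
  finally show ?thesis .
qed

lemma expectation_exp_hits:
  fixes Q :: "'b pmf" and l :: real
  shows "measure_pmf.expectation (Pi_pmf {..<r} dflt (\<lambda>_. Q)) (\<lambda>T. exp (l * hits P r T)) =
         (1 + (exp l - 1) * measure_pmf.prob Q {x. P x}) ^ r"
proof -
  define f where "f = (\<lambda>x. if P x then exp l else 1)"
  have "exp (l * hits P r T) = (\<Prod>i<r. f (T i))" for T
  proof -
    have "(\<Prod>i<r. f (T i)) = exp l ^ card {i\<in>{..<r}. P (T i)}"
      unfolding f_def using prod.inter_filter[of "{..<r}" "\<lambda>_. exp l" "\<lambda>i. P (T i)"] by simp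
    then show ?thesis by (simp add: hits_def exp_of_nat_mult[symmetric] mult.commute)
  qed
  moreover have "measure_pmf.expectation Q f = 1 + (exp l - 1) * measure_pmf.prob Q {x. P x}"
  proof -
    have "f = (\<lambda>x. 1 + (exp l - 1) * indicator {x. P x} x)" by (auto simp: f_def)
    moreover have "integrable (measure_pmf Q) (\<lambda>x. (exp l - 1) * indicator {x. P x} x :: real)"
      by (rule integrable_measure_pmf_bounded[where B="\<bar>exp l - 1\<bar>"]) (auto simp: indicator_def)
    ultimately show ?thesis by simp
  qed
  moreover have "measure_pmf.expectation (Pi_pmf {..<r} dflt (\<lambda>_. Q)) (\<lambda>T. \<Prod>i<r. f (T i)) =
                 (\<Prod>i<r. measure_pmf.expectation Q f)"
    by (rule expectation_prod_Pi_pmf)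
      (auto simp: f_def intro!: integrable_measure_pmf_bounded[where B="exp l + 1"])
  ultimately show ?thesis by simp
qed

lemma one_plus_mult_power_le_exp:
  fixes q l :: real
  assumes "0 \<le> q" "q \<le> 1"
  shows "(1 + (exp l - 1) * q) ^ r \<le> exp (real r * q * (exp l - 1))"
proof -
  have "0 \<le> (1 - q) + exp l * q" using assms by (intro add_nonneg_nonneg) auto
  then have "0 \<le> 1 + (exp l - 1) * q" by (simp add: algebra_simps)
  then have "(1 + (exp l - 1) * q) ^ r \<le> exp ((exp l - 1) * q) ^ r"
    by (intro power_mono) (use exp_ge_add_one_self in auto)
  also have "\<dots> = exp (real r * q * (exp l - 1))"
    by (simp add: exp_of_nat_mult[symmetric] mult_ac)
  finally show ?thesis .
qed

lemma prob_hits_ge_le: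
  assumes "0 \<le> l"
  shows "measure_pmf.prob (Pi_pmf {..<r} dflt (\<lambda>_. Q)) {T. a \<le> hits P r T} \<le>
     exp (real r * measure_pmf.prob Q {x. P x} * (exp l - 1) - l * a)"
proof -
  let ?q = "measure_pmf.prob Q {x. P x}"
  let ?M = "Pi_pmf {..<r} dflt (\<lambda>_. Q)"
  have "measure_pmf.prob ?M {T. a \<le> hits P r T} \<le>
        measure_pmf.expectation ?M (\<lambda>T. exp (l * hits P r T)) / exp (l * a)"
    using assms hits_bounds
    by (intro markov_inequality_pmf[where f="\<lambda>x. exp (l * x)"]
        integrable_measure_pmf_bounded[where B="exp (l * real r)"]) (auto intro!: mult_left_mono)
  also have "\<dots> = (1 + (exp l - 1) * ?q) ^ r / exp (l * a)"
    by (simp add: expectation_exp_hits)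
  also have "\<dots> \<le> exp (real r * ?q * (exp l - 1)) / exp (l * a)"
    by (intro divide_right_mono one_plus_mult_power_le_exp) auto
  finally show ?thesis by (simp add: exp_diff)
qed

lemma prob_hits_le_le:
  assumes "0 \<le> l"
  shows "measure_pmf.prob (Pi_pmf {..<r} dflt (\<lambda>_. Q)) {T. hits P r T \<le> b} \<le>
     exp (real r * measure_pmf.prob Q {x. P x} * (exp (- l) - 1) + l * b)"
proof -
  let ?q = "measure_pmf.prob Q {x. P x}"
  let ?M = "Pi_pmf {..<r} dflt (\<lambda>_. Q)"
  have "measure_pmf.prob ?M {T. hits P r T \<le> b} = measure_pmf.prob ?M {T. - b \<le> - hits P r T}"
    by simp
  also have "\<dots> \<le> measure_pmf.expectation ?M (\<lambda>T. exp (l * (- hits P r T))) / exp (l * (- b))"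
    using assms hits_bounds
    by (intro markov_inequality_pmf[where f="\<lambda>x. exp (l * x)"]
        integrable_measure_pmf_bounded[where B=1]) (auto intro!: mult_left_mono mult_nonneg_nonneg simp: hits_bounds)
  also have "\<dots> = (1 + (exp (- l) - 1) * ?q) ^ r / exp (l * (- b))"
    using expectation_exp_hits[of r dflt Q "- l" P] by simp
  also have "\<dots> \<le> exp (real r * ?q * (exp (- l) - 1)) / exp (l * (- b))"
    by (intro divide_right_mono one_plus_mult_power_le_exp) auto
  also have "\<dots> = exp (real r * ?q * (exp (- l) - 1) - l * (- b))"
    by (rule exp_diff[symmetric])
  finally show ?thesis by simp
qed

text \<open>For means below \<open>\<epsilon>/4\<close> the exponential-moment bound above loses the factor \<open>q\<close>
  needed later; Markov's inequality for \<open>exp x - 1\<close>, which vanishes at \<open>0\<close>, keeps it.\<close>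

lemma prob_hits_ge_le_small:
  assumes "0 < a"
  shows "measure_pmf.prob (Pi_pmf {..<r} dflt (\<lambda>_. Q)) {T. a \<le> hits P r T} \<le>
     (exp (real r * measure_pmf.prob Q {x. P x} * (exp 1 - 1)) - 1) / (exp a - 1)"
proof -
  let ?q = "measure_pmf.prob Q {x. P x}"
  let ?M = "Pi_pmf {..<r} dflt (\<lambda>_. Q)"
  have int: "integrable (measure_pmf ?M) (\<lambda>T. exp (hits P r T))"
    using hits_bounds by (intro integrable_measure_pmf_bounded[where B="exp (real r)"]) simp
  have "measure_pmf.prob ?M {T. a \<le> hits P r T} \<le>
        measure_pmf.expectation ?M (\<lambda>T. exp (hits P r T) - 1) / (exp a - 1)"
    using assms hits_bounds int by (intro markov_inequality_pmf[where f="\<lambda>x. exp x - 1"]) auto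
  also have "measure_pmf.expectation ?M (\<lambda>T. exp (hits P r T) - 1) =
             measure_pmf.expectation ?M (\<lambda>T. exp (1 * hits P r T)) - 1"
    using int by simp
  also have "\<dots> = (1 + (exp 1 - 1) * ?q) ^ r - 1"
    by (rule arg_cong[where f="\<lambda>x. x - 1"], rule expectation_exp_hits)
  also have "((1 + (exp 1 - 1) * ?q) ^ r - 1) / (exp a - 1) \<le>
             (exp (real r * ?q * (exp 1 - 1)) - 1) / (exp a - 1)"
    using assms by (intro divide_right_mono diff_right_mono one_plus_mult_power_le_exp) auto
  finally show ?thesis .
qed

lemma exp_neg_le_quadratic: "0 \<le> (l::real) \<Longrightarrow> exp (- l) \<le> 1 - l + l\<^sup>2 / 2"
proof -
  assume l: "0 \<le> l"
  obtain t where t: "exp (- l) = (\<Sum>m<3. (- l) ^ m / fact m) + exp t / fact 3 * (- l) ^ 3"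
    using Maclaurin_exp_le[of "- l" 3] by blast
  have "(\<Sum>m<3. (- l) ^ m / fact m) = 1 - l + l\<^sup>2 / 2"
    by (simp add: numeral_3_eq_3 power2_eq_square)
  moreover have "exp t / fact 3 * (- l) ^ 3 \<le> 0"
    using l by (intro mult_nonneg_nonpos) (auto simp: power_odd_eq)
  ultimately show ?thesis using t by simp
qed

lemma exp_minus_one_le_mult_exp: "0 \<le> (x::real) \<Longrightarrow> exp x - 1 \<le> x * exp x"
proof -
  assume "0 \<le> x"
  have "(1 - x) * exp x \<le> exp (- x) * exp x" by (intro mult_right_mono exp_minus_ge) auto
  then show ?thesis by (simp add: exp_minus field_simps)
qed

lemma square_mult_exp_neg_le: "0 \<le> (y::real) \<Longrightarrow> y\<^sup>2 * exp (- y / 4) \<le> 32"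
proof -
  assume y: "0 \<le> y"
  have "1 + y / 4 + (y / 4)\<^sup>2 / 2 \<le> exp (y / 4)" using y by (intro exp_lower_Taylor_quadratic) simp
  then have "y\<^sup>2 \<le> 32 * exp (y / 4)" using y by (simp add: power2_eq_square)
  then have "y\<^sup>2 * exp (- y / 4) \<le> 32 * exp (y / 4) * exp (- y / 4)" by (intro mult_right_mono) auto
  then show ?thesis by (simp add: exp_minus field_simps)
qed

lemma exp_neg_le_inverse: "0 < (y::real) \<Longrightarrow> exp (- y) \<le> 1 / y"
proof -
  assume y: "0 < y"
  have "y \<le> exp y" using exp_ge_add_one_self[of y] by linarith
  then show ?thesis using y by (simp add: exp_minus field_simps)
qed

lemma chernoff_small_mean_arith:
  fixes R p e :: real
  assumes e: "0 < e" "e < 1" and L: "64 \<le> R * e\<^sup>2" and p: "0 \<le> p" "p \<le> e / 4"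
  shows "(exp (R * p * (exp 1 - 1)) - 1) / (exp (R * (p + e)) - 1) \<le> 2 * p * exp (- (R * e\<^sup>2) / 16)"
proof -
  define M where "M = R * e"
  define L where "L = R * e\<^sup>2"
  have R: "R > 0" using L e by (smt (verit) mult_nonpos_nonneg zero_le_power2)
  have LM: "L = M * e" unfolding L_def M_def by (simp add: power2_eq_square)
  have MLle: "L \<le> M" using LM e R unfolding M_def by (simp add: mult_left_le)
  have L64: "64 \<le> L" using L unfolding L_def .
  have M64: "64 \<le> M" using MLle L64 by simp
  have e2: "exp 1 - 1 \<le> (2::real)" using exp_le by linarith
  have x0: "0 \<le> R * p * (exp 1 - 1)" using R p by simp
  have x2: "R * p * (exp 1 - 1) \<le> 2 * R * p"
  proof -
    have "R * p * (exp 1 - 1) \<le> R * p * 2" by (rule mult_left_mono) (use R p e2 in auto)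
    then show ?thesis by simp
  qed
  have x1: "2 * R * p \<le> M / 2" using R p unfolding M_def by simp
  have num: "exp (R * p * (exp 1 - 1)) - 1 \<le> 2 * R * p * exp (M / 2)"
  proof -
    have "exp (R * p * (exp 1 - 1)) - 1 \<le> R * p * (exp 1 - 1) * exp (R * p * (exp 1 - 1))"
      by (rule exp_minus_one_le_mult_exp[OF x0])
    also have "\<dots> \<le> 2 * R * p * exp (M / 2)"
      by (rule mult_mono) (use x0 x1 x2 in auto)
    finally show ?thesis .
  qed
  have den: "exp M / 2 \<le> exp (R * (p + e)) - 1"
  proof -
    have "exp M \<le> exp (R * (p + e))" using R p unfolding M_def by (simp add: distrib_left)
    moreover have "2 \<le> exp M" using M64 exp_ge_add_one_self[of M] by linarith
    ultimately show ?thesis by linarith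
  qed
  have "(exp (R * p * (exp 1 - 1)) - 1) / (exp (R * (p + e)) - 1) \<le> (2 * R * p * exp (M / 2)) / (exp M / 2)"
    using num den x0 R p by (intro frac_le) auto
  also have "\<dots> = 4 * R * p * exp (- M / 2)"
    by (simp add: field_simps exp_minus exp_add[symmetric] flip: exp_diff)
  also have "\<dots> = 4 * p / L * (M\<^sup>2 * exp (- M / 4)) * exp (- M / 4)"
  proof -
    have RM: "R = M\<^sup>2 / L" using LM e R unfolding M_def by (simp add: power2_eq_square field_simps)
    show ?thesis unfolding RM by (simp add: field_simps exp_add[symmetric])
  qed
  also have "\<dots> \<le> 4 * p / L * 32 * exp (- L / 4)"
    using square_mult_exp_neg_le[of M] M64 MLle p L64 by (intro mult_mono) auto
  also have "\<dots> \<le> 2 * p * exp (- L / 16)"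
  proof (rule mult_mono)
    show "4 * p / L * 32 \<le> 2 * p" using L64 p mult_right_mono[OF L64 p(1)] by (simp add: field_simps)
  qed (use p L64 in auto)
  finally show ?thesis unfolding L_def by simp
qed

lemma chernoff_large_mean_arith:
  fixes R p e :: real
  assumes L: "64 \<le> R * e\<^sup>2" and p: "0 < p" "p \<le> 1"
  shows "2 * exp (- (R * e\<^sup>2) / (8 * p)) \<le> 2 * p * exp (- (R * e\<^sup>2) / 16)"
proof -
  define L where "L = R * e\<^sup>2"
  have L64: "64 \<le> L" using L unfolding L_def .
  have "exp (- L / (8 * p)) = exp (- L / (16 * p)) * exp (- L / (16 * p))"
    by (simp add: exp_add[symmetric] field_simps)
  also have "\<dots> \<le> exp (- L / 16) * (16 * p / L)"
  proof (rule mult_mono)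
    have "L / 16 \<le> L / (16 * p)" using p L64 by (simp add: field_simps mult_left_le)
    then show "exp (- L / (16 * p)) \<le> exp (- L / 16)" by simp
    have "exp (- (L / (16 * p))) \<le> 1 / (L / (16 * p))" using p L64 by (intro exp_neg_le_inverse) simp
    then show "exp (- L / (16 * p)) \<le> 16 * p / L" by simp
  qed (use p L64 in auto)
  also have "\<dots> \<le> exp (- L / 16) * p"
    using p L64 by (intro mult_left_mono) (auto simp: field_simps)
  finally show ?thesis unfolding L_def by (simp add: mult_ac)
qed

lemma chernoff_upper_exponent_arith:
  fixes R p e :: real
  assumes e: "0 < e" and R: "0 \<le> R" and p: "e / 4 < p"
  defines "l \<equiv> min 1 (e / (2 * p))"
  shows "R * p * (exp l - 1) - l * (R * (p + e)) \<le> - (R * e\<^sup>2) / (8 * p)"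
proof -
  have p0: "0 < p" using p e by linarith
  have l: "0 \<le> l" "l \<le> 1" using e p0 unfolding l_def by auto
  have "exp l - 1 \<le> l + l\<^sup>2" using exp_bound[OF l] by simp
  then have "R * p * (exp l - 1) \<le> R * p * (l + l\<^sup>2)" using R p0 by (intro mult_left_mono) auto
  then have "R * p * (exp l - 1) - l * (R * (p + e)) \<le> R * (p * l\<^sup>2 - l * e)"
    by (simp add: algebra_simps power2_eq_square)
  also have "\<dots> \<le> R * (- e\<^sup>2 / (8 * p))"
  proof (rule mult_left_mono[OF _ R])
    show "p * l\<^sup>2 - l * e \<le> - e\<^sup>2 / (8 * p)"
    proof (cases "e \<le> 2 * p")
      case True
      then have lE: "l = e / (2 * p)" unfolding l_def using p0 by auto
      have "p * l\<^sup>2 - l * e = - e\<^sup>2 / (4 * p)"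
        unfolding lE using p0 by (simp add: field_simps power2_eq_square)
      moreover have "- e\<^sup>2 / (4 * p) \<le> - e\<^sup>2 / (8 * p)"
        using p0 by (simp add: field_simps)
      ultimately show ?thesis by simp
    next
      case False
      then have "l = 1" unfolding l_def using p0 by auto
      have "(p - e / 4) * (p - e / 2) \<le> 0" using p False by (intro mult_nonneg_nonpos) auto
      moreover have "0 < e * p" using e p0 by simp
      ultimately have "8 * p * (p - e) \<le> - e\<^sup>2"
        by (simp add: algebra_simps power2_eq_square)
      then show ?thesis using \<open>l = 1\<close> p0 by (simp add: field_simps)
    qed
  qed
  finally show ?thesis by simp
qed

lemma chernoff_lower_exponent_arith:
  fixes R p e :: real
  assumes e: "0 < e" and R: "0 \<le> R" and p: "e < p"
  shows "R * p * (exp (- (e / p)) - 1) + e / p * (R * (p - e)) \<le> - (R * e\<^sup>2) / (8 * p)"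
proof -
  have p0: "0 < p" using p e by linarith
  define l where "l = e / p"
  have "exp (- l) - 1 \<le> - l + l\<^sup>2 / 2" using exp_neg_le_quadratic[of l] e p0 by (simp add: l_def)
  then have "R * p * (exp (- l) - 1) \<le> R * p * (- l + l\<^sup>2 / 2)" using R p0 by (intro mult_left_mono) auto
  then have "R * p * (exp (- l) - 1) + l * (R * (p - e)) \<le> R * (p * l\<^sup>2 / 2 - l * e)"
    by (simp add: algebra_simps power2_eq_square)
  also have "p * l\<^sup>2 / 2 - l * e = - (e\<^sup>2 / (2 * p))" unfolding l_def using p0 by (simp add: field_simps power2_eq_square)
  also have "R * - (e\<^sup>2 / (2 * p)) \<le> - (R * e\<^sup>2) / (8 * p)" using R p0 by (simp add: field_simps)
  finally show ?thesis unfolding l_def .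
qed

lemma prob_hits_tails_small_mean:
  fixes Q :: "'b pmf" and P :: "'b \<Rightarrow> bool" and r :: nat and dflt :: 'b
  defines "q \<equiv> measure_pmf.prob Q {x. P x}" and "M \<equiv> Pi_pmf {..<r} dflt (\<lambda>_. Q)"
  assumes e: "0 < e" "e < 1" and L: "64 \<le> real r * e\<^sup>2" and q: "q \<le> e / 4"
  shows "measure_pmf.prob M {T. real r * (q + e) \<le> hits P r T} +
         measure_pmf.prob M {T. hits P r T < real r * (q - e)} \<le> 2 * q * exp (- (real r * e\<^sup>2) / 16)"
proof -
  have q0: "0 \<le> q" unfolding q_def by simp
  have "0 < real r" using L by (cases r) auto
  then have "real r * (q - e) < 0" "0 < real r * (q + e)"
    using q q0 e by (auto intro: mult_pos_neg)
  then have "\<not> hits P r T < real r * (q - e)" for T using hits_bounds(1)[of P r T] by linarith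
  then have "{T. hits P r T < real r * (q - e)} = {}" by blast
  moreover have "measure_pmf.prob M {T. real r * (q + e) \<le> hits P r T} \<le>
      (exp (real r * q * (exp 1 - 1)) - 1) / (exp (real r * (q + e)) - 1)"
    unfolding M_def q_def by (rule prob_hits_ge_le_small) (use \<open>0 < real r * (q + e)\<close> q_def in simp)
  moreover have "\<dots> \<le> 2 * q * exp (- (real r * e\<^sup>2) / 16)"
    by (rule chernoff_small_mean_arith) (use e L q q0 in auto)
  ultimately show ?thesis by simp
qed

lemma prob_hits_tails_large_mean:
  fixes Q :: "'b pmf" and P :: "'b \<Rightarrow> bool" and r :: nat and dflt :: 'b
  defines "q \<equiv> measure_pmf.prob Q {x. P x}" and "M \<equiv> Pi_pmf {..<r} dflt (\<lambda>_. Q)"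
  assumes e: "0 < e" and q: "e / 4 < q"
  shows "measure_pmf.prob M {T. real r * (q + e) \<le> hits P r T} \<le> exp (- (real r * e\<^sup>2) / (8 * q))"
    "measure_pmf.prob M {T. hits P r T < real r * (q - e)} \<le> exp (- (real r * e\<^sup>2) / (8 * q))"
proof -
  have q0: "0 < q" using e q by linarith
  define l where "l = min 1 (e / (2 * q))"
  have "measure_pmf.prob M {T. real r * (q + e) \<le> hits P r T} \<le>
        exp (real r * q * (exp l - 1) - l * (real r * (q + e)))"
    unfolding M_def q_def by (rule prob_hits_ge_le) (use e q0 in \<open>auto simp: l_def\<close>)
  also have "\<dots> \<le> exp (- (real r * e\<^sup>2) / (8 * q))"
    using chernoff_upper_exponent_arith[OF e _ q, of "real r"] by (simp add: l_def)
  finally show "measure_pmf.prob M {T. real r * (q + e) \<le> hits P r T} \<le> exp (- (real r * e\<^sup>2) / (8 * q))" .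
  show "measure_pmf.prob M {T. hits P r T < real r * (q - e)} \<le> exp (- (real r * e\<^sup>2) / (8 * q))"
  proof (cases "q \<le> e")
    case True
    then have "real r * (q - e) \<le> 0" by (simp add: mult_nonneg_nonpos)
    then have "\<not> hits P r T < real r * (q - e)" for T using hits_bounds(1)[of P r T] by linarith
    then have "{T. hits P r T < real r * (q - e)} = {}" by blast
    then show ?thesis by simp
  next
    case False
    have "measure_pmf.prob M {T. hits P r T < real r * (q - e)} \<le>
          measure_pmf.prob M {T. hits P r T \<le> real r * (q - e)}"
      by (rule measure_pmf.finite_measure_mono) auto
    also have "\<dots> \<le> exp (real r * q * (exp (- (e / q)) - 1) + e / q * (real r * (q - e)))"
      unfolding M_def q_def by (rule prob_hits_le_le) (use e q0 in \<open>simp add: q_def\<close>)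
    also have "\<dots> \<le> exp (- (real r * e\<^sup>2) / (8 * q))"
      using chernoff_lower_exponent_arith[OF e _, of "real r" q] False by simp
    finally show ?thesis .
  qed
qed

lemma prob_hits_deviation_le:
  fixes Q :: "'b pmf" and P :: "'b \<Rightarrow> bool" and r :: nat and dflt :: 'b
  defines "q \<equiv> measure_pmf.prob Q {x. P x}" and "M \<equiv> Pi_pmf {..<r} dflt (\<lambda>_. Q)"
  assumes e: "0 < e" "e < 1" and L: "64 \<le> real r * e\<^sup>2"
  shows "measure_pmf.prob M {T. e < \<bar>q - hits P r T / real r\<bar>} \<le> 2 * q * exp (- (real r * e\<^sup>2) / 16)"
proof -
  let ?U = "{T. real r * (q + e) \<le> hits P r T}" and ?L = "{T. hits P r T < real r * (q - e)}"
  have "0 < real r" using L by (cases r) auto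
  then have "{T. e < \<bar>q - hits P r T / real r\<bar>} \<subseteq> ?U \<union> ?L"
    by (auto simp: field_simps abs_if split: if_splits)
  then have "measure_pmf.prob M {T. e < \<bar>q - hits P r T / real r\<bar>} \<le> measure_pmf.prob M (?U \<union> ?L)"
    by (rule measure_pmf.finite_measure_mono) simp
  also have "\<dots> \<le> measure_pmf.prob M ?U + measure_pmf.prob M ?L"
    by (rule measure_Un_le) simp_all
  also have "\<dots> \<le> 2 * q * exp (- (real r * e\<^sup>2) / 16)"
  proof (cases "q \<le> e / 4")
    case True
    then show ?thesis unfolding q_def M_def by (rule prob_hits_tails_small_mean[OF e L])
  next
    case False
    then have "e / 4 < q" by simp
    from prob_hits_tails_large_mean[OF e(1) this[unfolded q_def], of r dflt]
    have "measure_pmf.prob M ?U + measure_pmf.prob M ?L \<le> 2 * exp (- (real r * e\<^sup>2) / (8 * q))"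
      unfolding q_def M_def by linarith
    also have "\<dots> \<le> 2 * q * exp (- (real r * e\<^sup>2) / 16)"
      by (rule chernoff_large_mean_arith) (use L False e in \<open>auto simp: q_def\<close>)
    finally show ?thesis .
  qed
  finally show ?thesis .
qed

lemma prob_exists_hits_deviation_le:
  fixes Q :: "'b pmf" and P :: "'a \<Rightarrow> 'b \<Rightarrow> bool"
  assumes "finite V" "0 < e" "e < 1" "64 \<le> real r * e\<^sup>2"
  shows "measure_pmf.prob (Pi_pmf {..<r} dflt (\<lambda>_. Q))
           {T. \<exists>v\<in>V. e < \<bar>measure_pmf.prob Q {x. P v x} - hits (P v) r T / real r\<bar>}
         \<le> 2 * (\<Sum>v\<in>V. measure_pmf.prob Q {x. P v x}) * exp (- (real r * e\<^sup>2) / 16)"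
proof -
  let ?M = "Pi_pmf {..<r} dflt (\<lambda>_. Q)"
  let ?B = "\<lambda>v. {T. e < \<bar>measure_pmf.prob Q {x. P v x} - hits (P v) r T / real r\<bar>}"
  have "measure_pmf.prob ?M {T. \<exists>v\<in>V. e < \<bar>measure_pmf.prob Q {x. P v x} - hits (P v) r T / real r\<bar>} =
        measure_pmf.prob ?M (\<Union>v\<in>V. ?B v)"
    by (rule arg_cong[where f="measure_pmf.prob ?M"]) blast
  also have "\<dots> \<le> (\<Sum>v\<in>V. measure_pmf.prob ?M (?B v))"
    by (rule measure_pmf.finite_measure_subadditive_finite) (use assms(1) in auto)
  also have "\<dots> \<le> (\<Sum>v\<in>V. 2 * measure_pmf.prob Q {x. P v x} * exp (- (real r * e\<^sup>2) / 16))"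
    by (intro sum_mono prob_hits_deviation_le) (use assms in auto)
  finally show ?thesis by (simp add: sum_distrib_left sum_distrib_right mult_ac)
qed

lemma prob_exists_hits_deviation_eq_0:
  fixes Q :: "'b pmf" and P :: "'a \<Rightarrow> 'b \<Rightarrow> bool"
  assumes "\<forall>v\<in>V. measure_pmf.prob Q {x. P v x} = 0" "0 \<le> e"
  shows "measure_pmf.prob (Pi_pmf {..<r} dflt (\<lambda>_. Q))
           {T. \<exists>v\<in>V. e < \<bar>measure_pmf.prob Q {x. P v x} - hits (P v) r T / real r\<bar>} = 0"
proof -
  have "hits (P v) r T = 0" if "v \<in> V" "T \<in> set_pmf (Pi_pmf {..<r} dflt (\<lambda>_. Q))" for v T
  proof -
    have "\<not> P v x" if "x \<in> set_pmf Q" for x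
      using assms(1) \<open>v \<in> V\<close> that unfolding measure_pmf_zero_iff by blast
    moreover have "\<forall>i<r. T i \<in> set_pmf Q" using that(2) by (simp add: set_Pi_pmf PiE_dflt_def)
    ultimately have "{i\<in>{..<r}. P v (T i)} = {}" by auto
    then show ?thesis unfolding hits_def by simp
  qed
  then show ?thesis unfolding measure_pmf_zero_iff using assms by auto
qed

section \<open>The sample size\<close>

lemma sample_size_ge:
  assumes "0 < c" "0 < \<epsilon>" "0 < \<delta>" "\<delta> < 1" "2 < D"
  shows "c / \<epsilon>\<^sup>2 * (real_of_int \<lfloor>log 2 (real D - 2)\<rfloor> + 1 + ln (1 / \<delta>)) \<le> real (sample_size c \<epsilon> \<delta> D)"
proof -
  have "0 \<le> log 2 (real D - 2)" using assms(5) by simp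
  moreover have "0 < ln (1 / \<delta>)" using assms(3,4) by simp
  ultimately have "0 \<le> c / \<epsilon>\<^sup>2 * (real_of_int \<lfloor>log 2 (real D - 2)\<rfloor> + 1 + ln (1 / \<delta>))"
    using assms(1) by (intro mult_nonneg_nonneg) auto
  then show ?thesis unfolding sample_size_def by linarith
qed

lemma chernoff_budget:
  fixes e d k :: real
  assumes e: "0 < e" and d: "0 < d" "d < 1" and k: "1 \<le> k"
    and r: "128 / e\<^sup>2 * (real_of_int \<lfloor>log 2 k\<rfloor> + 1 + ln (1 / d)) \<le> real r"
  shows "64 \<le> real r * e\<^sup>2" "2 * k * exp (- (real r * e\<^sup>2) / 16) < d"
proof -
  define A where "A = real_of_int \<lfloor>log 2 k\<rfloor> + 1"
  have A1: "1 \<le> A" unfolding A_def using k by simp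
  have lnk: "ln k \<le> A"
  proof -
    have "0 \<le> ln k" using k by simp
    then have "ln k * ln 2 \<le> ln k" using ln_2_less_1 by (simp add: mult_left_le)
    then have "ln k \<le> log 2 k" unfolding log_def by (simp add: field_simps)
    then show ?thesis unfolding A_def by linarith
  qed
  have ld: "0 < ln (1 / d)" using d by simp
  have "128 / e\<^sup>2 * (A + ln (1 / d)) * e\<^sup>2 \<le> real r * e\<^sup>2"
    using r by (intro mult_right_mono) (auto simp: A_def)
  moreover have "128 / e\<^sup>2 * (A + ln (1 / d)) * e\<^sup>2 = 128 * A + 128 * ln (1 / d)"
    using e by (simp add: field_simps)
  ultimately have L: "128 * A + 128 * ln (1 / d) \<le> real r * e\<^sup>2" by simp
  then show "64 \<le> real r * e\<^sup>2" using A1 ld by linarith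
  have "exp (- (real r * e\<^sup>2) / 16) \<le> exp (- (ln k + 1 + ln (1 / d)))"
    using L A1 lnk ld by simp
  also have "\<dots> = d / (k * exp 1)"
    using k d by (simp add: exp_minus exp_add exp_diff field_simps)
  finally have "2 * k * exp (- (real r * e\<^sup>2) / 16) \<le> 2 * d / exp 1"
    using k by (simp add: field_simps)
  also have "\<dots> < d"
    using d exp_less_mono[of "ln 2" 1] ln_2_less_1 by (simp add: field_simps)
  finally show "2 * k * exp (- (real r * e\<^sup>2) / 16) < d" .
qed

lemma prob_exists_hits_deviation_lt:
  fixes Q :: "'b pmf" and P :: "'a \<Rightarrow> 'b \<Rightarrow> bool" and e d :: real and D :: nat
  defines "r \<equiv> sample_size 128 e d D"
  assumes "finite V" "0 < e" "e < 1" "0 < d" "d < 1"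
    and sum: "(\<Sum>v\<in>V. measure_pmf.prob Q {x. P v x}) \<le> real (D - 2)"
  shows "measure_pmf.prob (Pi_pmf {..<r} dflt (\<lambda>_. Q))
           {T. \<exists>v\<in>V. e < \<bar>measure_pmf.prob Q {x. P v x} - hits (P v) r T / real r\<bar>} < d"
proof (cases "D \<le> 2")
  case True
  moreover have "0 \<le> (\<Sum>v\<in>V. measure_pmf.prob Q {x. P v x})" by (rule sum_nonneg) simp
  ultimately have "(\<Sum>v\<in>V. measure_pmf.prob Q {x. P v x}) = 0" using sum by simp
  then have "\<forall>v\<in>V. measure_pmf.prob Q {x. P v x} = 0"
    by (subst (asm) sum_nonneg_eq_0_iff[OF assms(2)]) auto
  from prob_exists_hits_deviation_eq_0[OF this, of e r dflt] show ?thesis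
    using assms(3,5) by simp
next
  case False
  have k: "1 \<le> real D - 2" "real (D - 2) = real D - 2" using False by auto
  note budget = chernoff_budget[OF assms(3,5,6) k(1) sample_size_ge[of 128 e d D, folded r_def]]
  have "measure_pmf.prob (Pi_pmf {..<r} dflt (\<lambda>_. Q))
          {T. \<exists>v\<in>V. e < \<bar>measure_pmf.prob Q {x. P v x} - hits (P v) r T / real r\<bar>}
        \<le> 2 * (\<Sum>v\<in>V. measure_pmf.prob Q {x. P v x}) * exp (- (real r * e\<^sup>2) / 16)"
    by (rule prob_exists_hits_deviation_le) (use assms budget False in auto)
  also have "\<dots> \<le> 2 * (real D - 2) * exp (- (real r * e\<^sup>2) / 16)"
    using sum k by (intro mult_right_mono) auto
  also have "\<dots> < d" by (rule budget(2)) (use assms False in auto)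
  finally show ?thesis .
qed

theorem theorem1:
  "\<exists>c::real. c > 0 \<and>
    (\<forall>(V::nat set) (E::(nat \<times> nat) set) (\<beta>::(nat \<times> nat) set) (D::nat) (\<epsilon>::real) (\<delta>::real).
      undirected_graph V E \<and> undirected_graph V (E \<union> \<beta>) \<and> connected_graph V E \<and>
      card V \<ge> 2 \<and> vertex_diameter V E \<le> D \<and>
      0 < \<epsilon> \<and> \<epsilon> < 1 \<and> 0 < \<delta> \<and> \<delta> < 1 \<longrightarrow>
      (let r = sample_size c \<epsilon> \<delta> D;
           S' = sample_set r (path_sampling V E) \<bind> updated_sample r E (E \<union> \<beta>)
       in measure_pmf.prob S'
            {T. \<exists>v\<in>V. \<bar>betweenness V (E \<union> \<beta>) v - approx_betweenness r T v\<bar> > \<epsilon>} < \<delta>))"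
proof (intro exI[of _ 128] conjI allI impI)
  fix V :: "nat set" and E \<beta> :: "(nat \<times> nat) set" and D :: nat and \<epsilon> \<delta> :: real
  assume "undirected_graph V E \<and> undirected_graph V (E \<union> \<beta>) \<and> connected_graph V E \<and>
      card V \<ge> 2 \<and> vertex_diameter V E \<le> D \<and> 0 < \<epsilon> \<and> \<epsilon> < 1 \<and> 0 < \<delta> \<and> \<delta> < 1"
  then have G: "undirected_graph V E" "undirected_graph V (E \<union> \<beta>)" "E \<subseteq> E \<union> \<beta>"
      "connected_graph V E" "card V \<ge> 2"
    and VD: "vertex_diameter V E \<le> D" and \<epsilon>: "0 < \<epsilon>" "\<epsilon> < 1" and \<delta>: "0 < \<delta>" "\<delta> < 1"
    by auto
  define r where "r = sample_size 128 \<epsilon> \<delta> D"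
  let ?Q = "path_sampling V (E \<union> \<beta>)"
  have "betweenness V (E \<union> \<beta>) v = measure_pmf.prob ?Q {p. internal v p}" for v
    using prob_internal_path_sampling[OF G(2) connected_graph_mono[OF G(4,3)] G(5)] by simp
  then have event: "{T. \<exists>v\<in>V. \<bar>betweenness V (E \<union> \<beta>) v - approx_betweenness r T v\<bar> > \<epsilon>} =
      {T. \<exists>v\<in>V. \<epsilon> < \<bar>measure_pmf.prob ?Q {p. internal v p} - hits (internal v) r T / real r\<bar>}"
    by (simp add: approx_betweenness_def hits_def)
  have "(\<Sum>v\<in>V. measure_pmf.prob ?Q {p. internal v p}) \<le> real (D - 2)"
    using sum_prob_internal_le_vertex_diameter[OF G] VD by simp
  from prob_exists_hits_deviation_lt[OF _ \<epsilon> \<delta> this, of "[]", folded r_def] G(1)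
  show "let r = sample_size 128 \<epsilon> \<delta> D;
           S' = sample_set r (path_sampling V E) \<bind> updated_sample r E (E \<union> \<beta>)
       in measure_pmf.prob S'
            {T. \<exists>v\<in>V. \<bar>betweenness V (E \<union> \<beta>) v - approx_betweenness r T v\<bar> > \<epsilon>} < \<delta>"
    unfolding Let_def r_def[symmetric] updated_sample_eq_Pi_pmf[OF G] event
    by (simp add: undirected_graph_def)
qed simp

end
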